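(* Let $p$ be an odd prime and $a,b\in\mathbb Z_p$ with $ab(a^2-b^2)\not\equiv0\pmod p$. Then $$\sum_{k=0}^{[p/4]}\binom{4k}{2k}\Big(\frac{a^2-b^2}{16a^2}\Big)^k\equiv\frac1{2b}\Big(\frac{2a}p\Big)\Big\{(a+b)\Big(\frac{a+b}p\Big)-(a-b)\Big(\frac{a-b}p\Big)\Big\}\pmod p$$ and $$\sum_{k=0}^{[p/4]}\binom{4k}{2k}\Big(\frac{a^2}{16(a^2-b^2)}\Big)^k\equiv\begin{cases}\frac1{2b}\big\{(a+b)\big(\frac{a-b}p\big)-(a-b)\big(\frac{a+b}p\big)\big\}(b^2-a^2)^{\frac{p-1}4}\pmod p&\text{if }4\mid p-1,\\ \frac1{2b}\big\{\big(\frac{a+b}p\big)-\big(\frac{a-b}p\big)\big\}(b^2-a^2)^{\frac{p+1}4}\pmod p&\text{if }4\mid p-3.\end{cases}$$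
   Context: $[x]$ is the greatest integer $\le x$; $\mathbb Z_p$ is the set of rational numbers whose denominator is not divisible by $p$; $(\frac{\cdot}{p})$ is the Legendre symbol (extended to $\mathbb Z_p$ via residues). *)

theory Defs
  imports Complex_Main "HOL-Number_Theory.Number_Theory"
begin

definition in_Zp :: "nat \<Rightarrow> rat \<Rightarrow> bool" where
  "in_Zp p x \<longleftrightarrow> \<not> int p dvd snd (quotient_of x)"

definition qcong :: "nat \<Rightarrow> rat \<Rightarrow> rat \<Rightarrow> bool" where
  "qcong p x y \<longleftrightarrow> (\<exists>z. in_Zp p z \<and> x - y = of_nat p * z)"

definition qLegendre :: "rat \<Rightarrow> nat \<Rightarrow> int" where
  "qLegendre x p = Legendre (SOME r :: int. qcong p (of_int r) x) (int p)"

end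

theory Submission
  imports Defs "HOL-Computational_Algebra.Polynomial"
begin

text \<open>
  Put n = (p - 1)/2, A = a + b and B = a - b. Since n \<equiv> -1/2 (mod p), one has
  C(4k, 2k) \<equiv> 16^k C(n, 2k), so both sums reduce to \<Sum>_k C(n, 2k) u^k with u = 4AB/(A + B)^2
  or u = (A + B)^2/(4AB). For A = x^2, B = y^2 the even part of (x + y)^(2n) = ((A + B) + 2xy)^n
  gives the polynomial identity \<Sum>_k C(n, 2k) (4AB)^k (A + B)^(n-2k) = \<Sum>_j C(2n, 2j) A^j B^(n-j),
  and C(p - 1, i) \<equiv> (-1)^i turns its right-hand side into (A^(n+1) - B^(n+1))/(A - B).
  Euler's criterion A^n \<equiv> (A/p) now gives the first congruence. For the reciprocal u one reverses
  the order of summation, which for odd n leads to the odd part of the expansion instead; the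
  remaining factor (-1)^\<lceil>n/2\<rceil> 2^n is \<equiv> 1 by the same identities taken at A = -1, B = 1.
\<close>

lemma in_Zp_iff_fraction:
  assumes p: "prime p"
  shows "in_Zp p x \<longleftrightarrow> (\<exists>r s. \<not> int p dvd s \<and> x = of_int r / of_int s)"
proof
  assume "in_Zp p x"
  then show "\<exists>r s. \<not> int p dvd s \<and> x = of_int r / of_int s"
    unfolding in_Zp_def by (metis prod.collapse quotient_of_div)
next
  assume "\<exists>r s. \<not> int p dvd s \<and> x = of_int r / of_int s"
  then obtain r s where s: "\<not> int p dvd s" and x: "x = of_int r / of_int s" by blast
  obtain n d where nd: "quotient_of x = (n, d)" by (cases "quotient_of x")
  have "d > 0" "coprime n d" "x = of_int n / of_int d"
    using nd quotient_of_denom_pos quotient_of_coprime quotient_of_div by blast+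
  moreover have "s \<noteq> 0" using s by auto
  ultimately have "of_int (n * s) = (of_int (r * d) :: rat)"
    using x by (simp add: field_simps)
  then have "n * s = r * d" by linarith
  then have "d dvd s"
    by (metis \<open>coprime n d\<close> coprime_commute coprime_dvd_mult_right_iff dvd_triv_right)
  with s nd show "in_Zp p x" unfolding in_Zp_def by (auto dest: dvd_trans)
qed

lemma in_Zp_of_int [simp]:
  assumes p: "prime p" shows "in_Zp p (of_int k)"
proof -
  have "\<not> int p dvd 1" using prime_gt_1_nat[OF p] by simp
  then show ?thesis unfolding in_Zp_iff_fraction[OF p] by (intro exI[of _ k] exI[of _ 1]) simp
qed

lemma in_Zp_of_nat [simp]: "prime p \<Longrightarrow> in_Zp p (of_nat k)"
  using in_Zp_of_int[of p "int k"] by simp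

lemma in_Zp_numeral [simp]: "prime p \<Longrightarrow> in_Zp p (numeral k)"
  using in_Zp_of_nat[of p "numeral k"] by simp

lemma in_Zp_0 [simp]: "prime p \<Longrightarrow> in_Zp p 0"
  and in_Zp_1 [simp]: "prime p \<Longrightarrow> in_Zp p 1"
  using in_Zp_of_int[of p 0] in_Zp_of_int[of p 1] by simp_all

lemma in_Zp_mult [intro]:
  assumes p: "prime p" and "in_Zp p x" "in_Zp p y" shows "in_Zp p (x * y)"
proof -
  obtain r s r' s' where "\<not> int p dvd s" "x = of_int r / of_int s"
    and "\<not> int p dvd s'" "y = of_int r' / of_int s'"
    using assms by (meson in_Zp_iff_fraction)
  moreover from calculation have "\<not> int p dvd s * s'"
    using p by (simp add: prime_dvd_mult_iff)
  moreover from calculation have "x * y = of_int (r * r') / of_int (s * s')" by simp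
  ultimately show ?thesis using p in_Zp_iff_fraction by blast
qed

lemma in_Zp_add [intro]:
  assumes p: "prime p" and "in_Zp p x" "in_Zp p y" shows "in_Zp p (x + y)"
proof -
  obtain r s r' s' where "\<not> int p dvd s" "x = of_int r / of_int s"
    and "\<not> int p dvd s'" "y = of_int r' / of_int s'"
    using assms by (meson in_Zp_iff_fraction)
  moreover from calculation have "\<not> int p dvd s * s'"
    using p by (simp add: prime_dvd_mult_iff)
  moreover from calculation have "s \<noteq> 0" "s' \<noteq> 0" by auto
  moreover from calculation have "x + y = of_int (r * s' + r' * s) / of_int (s * s')"
    by (auto simp: field_simps)
  ultimately show ?thesis using p in_Zp_iff_fraction by blast
qed

lemma in_Zp_uminus [intro]: "prime p \<Longrightarrow> in_Zp p x \<Longrightarrow> in_Zp p (- x)"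
  using in_Zp_mult[of p "-1" x] in_Zp_of_int[of p "-1"] by simp

lemma in_Zp_diff [intro]: "prime p \<Longrightarrow> in_Zp p x \<Longrightarrow> in_Zp p y \<Longrightarrow> in_Zp p (x - y)"
  using in_Zp_add[of p x "- y"] by auto

lemma in_Zp_power [intro]: "prime p \<Longrightarrow> in_Zp p x \<Longrightarrow> in_Zp p (x ^ k)"
  by (induction k) (simp_all add: in_Zp_mult)

lemma qcong_of_int_iff:
  assumes p: "prime p"
  shows "qcong p (of_int u) (of_int v) \<longleftrightarrow> [u = v] (mod int p)"
proof
  assume "qcong p (of_int u) (of_int v)"
  then obtain z where z: "in_Zp p z" "of_int u - of_int v = of_nat p * z"
    unfolding qcong_def by blast
  then obtain r s where s: "\<not> int p dvd s" "z = of_int r / of_int s"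
    using in_Zp_iff_fraction[OF p] by blast
  then have "s \<noteq> 0" by auto
  with z s have "of_int ((u - v) * s) = (of_int (int p * r) :: rat)"
    by (simp add: field_simps)
  then have "int p dvd (u - v) * s" by (metis dvd_triv_left of_int_eq_iff)
  then show "[u = v] (mod int p)"
    using s p by (simp add: cong_iff_dvd_diff prime_dvd_mult_iff)
next
  assume "[u = v] (mod int p)"
  then obtain k where "u - v = int p * k" by (auto simp: cong_iff_dvd_diff dvd_def)
  then have "of_int u - of_int v = of_nat p * (of_int k :: rat)"
    by (metis of_int_diff of_int_mult of_int_of_nat_eq)
  then show "qcong p (of_int u) (of_int v)" unfolding qcong_def using p by auto
qed

lemma qcong_refl [simp]: "prime p \<Longrightarrow> qcong p x x"
  unfolding qcong_def by (auto intro: exI[of _ 0])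

lemma qcong_sym:
  assumes p: "prime p" and "qcong p x y" shows "qcong p y x"
proof -
  obtain z where "in_Zp p z" "x - y = of_nat p * z" using assms unfolding qcong_def by blast
  then show ?thesis unfolding qcong_def using p by (intro exI[of _ "- z"]) (auto simp: algebra_simps)
qed

lemma qcong_add:
  assumes p: "prime p" and "qcong p x y" "qcong p x' y'" shows "qcong p (x + x') (y + y')"
proof -
  obtain z z' where "in_Zp p z" "x - y = of_nat p * z" "in_Zp p z'" "x' - y' = of_nat p * z'"
    using assms unfolding qcong_def by blast
  then show ?thesis unfolding qcong_def using p by (intro exI[of _ "z + z'"]) (auto simp: algebra_simps)
qed

lemma qcong_diff:
  assumes p: "prime p" and "qcong p x y" "qcong p x' y'" shows "qcong p (x - x') (y - y')"
proof -
  obtain z z' where "in_Zp p z" "x - y = of_nat p * z" "in_Zp p z'" "x' - y' = of_nat p * z'"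
    using assms unfolding qcong_def by blast
  then show ?thesis unfolding qcong_def using p by (intro exI[of _ "z - z'"]) (auto simp: algebra_simps)
qed

lemma qcong_trans: "prime p \<Longrightarrow> qcong p x y \<Longrightarrow> qcong p y w \<Longrightarrow> qcong p x w"
  using qcong_add[of p x y y w] qcong_diff[of p "x + y" "y + w" y y] by simp

lemma qcong_mult_left:
  assumes p: "prime p" and c: "in_Zp p c" and "qcong p x y" shows "qcong p (c * x) (c * y)"
proof -
  obtain z where "in_Zp p z" "x - y = of_nat p * z" using assms unfolding qcong_def by blast
  then show ?thesis unfolding qcong_def using p c
    by (intro exI[of _ "c * z"]) (auto simp: algebra_simps)
qed

lemma qcong_mult:
  assumes p: "prime p" and "qcong p x y" "qcong p x' y'" "in_Zp p x" "in_Zp p y'"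
  shows "qcong p (x * x') (y * y')"
proof -
  have "qcong p (x * x') (x * y')" "qcong p (y' * x) (y' * y)"
    using assms by (auto intro: qcong_mult_left)
  then show ?thesis using qcong_trans[OF p] by (metis mult.commute)
qed

lemma in_Zp_qcong:
  assumes p: "prime p" and "qcong p x y" "in_Zp p y" shows "in_Zp p x"
proof -
  obtain z where "in_Zp p z" "x = y + of_nat p * z" using assms unfolding qcong_def
    by (metis add.commute diff_add_cancel)
  then show ?thesis using p assms by (simp add: in_Zp_add in_Zp_mult)
qed

lemma qcong_power:
  assumes p: "prime p" and "qcong p x y" "in_Zp p y" shows "qcong p (x ^ k) (y ^ k)"
proof (induction k)
  case (Suc k)
  then show ?case using qcong_mult[OF p assms(2) Suc] in_Zp_qcong[OF assms] in_Zp_power[OF p assms(3)]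
    by simp
qed (use p in simp)

lemma qcong_sum:
  assumes p: "prime p" shows "(\<And>i. i \<in> I \<Longrightarrow> qcong p (f i) (g i)) \<Longrightarrow> qcong p (sum f I) (sum g I)"
  by (induction I rule: infinite_finite_induct) (auto simp: p intro: qcong_add[OF p])

lemma in_Zp_imp_qcong_of_int:
  assumes p: "prime p" and x: "in_Zp p x" shows "\<exists>r. qcong p (of_int r) x"
proof -
  obtain r s where s: "\<not> int p dvd s" "x = of_int r / of_int s"
    using assms in_Zp_iff_fraction by blast
  then have "coprime s (int p)"
    using p by (metis coprime_commute prime_imp_coprime prime_nat_int_transfer)
  then obtain s' k where k: "1 - s * s' = int p * k"
    by (metis cong_iff_dvd_diff cong_solve_coprime_int cong_sym dvdE)
  have "s \<noteq> 0" using s by auto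
  then have "x - of_int (r * s') = of_int r * of_int (1 - s * s') / of_int s"
    using s by (simp add: field_simps)
  then have "x - of_int (r * s') = of_nat p * (of_int (r * k) / of_int s)"
    using k by simp
  moreover have "in_Zp p (of_int (r * k) / of_int s)"
    using in_Zp_iff_fraction[OF p] s by blast
  ultimately have "qcong p x (of_int (r * s'))" unfolding qcong_def by blast
  then show ?thesis using qcong_sym[OF p] by blast
qed

(* x \<noteq> 0 is needed because inverse 0 = 0. *)
definition Zp_unit :: "nat \<Rightarrow> rat \<Rightarrow> bool" where
  "Zp_unit p x \<longleftrightarrow> x \<noteq> 0 \<and> in_Zp p x \<and> in_Zp p (inverse x)"

lemma Zp_unit_mult:
  "prime p \<Longrightarrow> Zp_unit p x \<Longrightarrow> Zp_unit p y \<Longrightarrow> Zp_unit p (x * y)"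
  unfolding Zp_unit_def by (auto simp: in_Zp_mult)

lemma Zp_unit_power: "prime p \<Longrightarrow> Zp_unit p x \<Longrightarrow> Zp_unit p (x ^ k)"
  unfolding Zp_unit_def by (auto simp: power_inverse[symmetric] in_Zp_power)

lemma Zp_unit_uminus: "prime p \<Longrightarrow> Zp_unit p x \<Longrightarrow> Zp_unit p (- x)"
  unfolding Zp_unit_def by (simp add: in_Zp_uminus)

lemma Zp_unit_of_int:
  assumes p: "prime p" and "\<not> int p dvd k" shows "Zp_unit p (of_int k)"
proof -
  have "in_Zp p (of_int 1 / of_int k)" using assms in_Zp_iff_fraction[OF p] by blast
  moreover have "k \<noteq> 0" using assms by auto
  ultimately show ?thesis unfolding Zp_unit_def using p by (simp add: divide_inverse)
qed

lemma Zp_unit_two: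
  assumes p: "prime p" and "odd p" shows "Zp_unit p 2"
proof -
  have "p \<noteq> 2" using assms by auto
  then have "\<not> p dvd 2" using prime_gt_1_nat[OF p] by (auto dest: dvd_imp_le)
  then show ?thesis using Zp_unit_of_int[OF p, of 2] by (simp add: int_dvd_int_iff[of p 2, simplified])
qed

lemma in_Zp_divide: "prime p \<Longrightarrow> in_Zp p x \<Longrightarrow> Zp_unit p c \<Longrightarrow> in_Zp p (x / c)"
  unfolding Zp_unit_def by (simp add: divide_inverse in_Zp_mult)

lemma Zp_unit_mult_iff:
  assumes p: "prime p" and x: "in_Zp p x" and y: "in_Zp p y"
  shows "Zp_unit p (x * y) \<longleftrightarrow> Zp_unit p x \<and> Zp_unit p y"
proof
  assume u: "Zp_unit p (x * y)"
  then have "inverse x = y * inverse (x * y)" "inverse y = x * inverse (x * y)"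
    unfolding Zp_unit_def by (simp_all add: field_simps)
  moreover have "in_Zp p (y * inverse (x * y))" using u y p unfolding Zp_unit_def by (intro in_Zp_mult) auto
  moreover have "in_Zp p (x * inverse (x * y))" using u x p unfolding Zp_unit_def by (intro in_Zp_mult) auto
  ultimately have "in_Zp p (inverse x)" "in_Zp p (inverse y)" by (simp_all only:)
  then show "Zp_unit p x \<and> Zp_unit p y" using u x y unfolding Zp_unit_def by auto
qed (use Zp_unit_mult[OF p] in blast)

lemma Zp_unit_iff:
  assumes p: "prime p" shows "Zp_unit p x \<longleftrightarrow> in_Zp p x \<and> \<not> qcong p x 0"
proof
  assume u: "Zp_unit p x"
  show "in_Zp p x \<and> \<not> qcong p x 0"
  proof (intro conjI notI)
    assume "qcong p x 0"
    then have "qcong p (inverse x * x) (inverse x * 0)"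
      using u p qcong_mult_left unfolding Zp_unit_def by blast
    then have "qcong p (of_int 1) (of_int 0)" using u unfolding Zp_unit_def by simp
    then have "[1 = 0] (mod int p)" using qcong_of_int_iff[OF p] by blast
    then show False using prime_gt_1_nat[OF p] by (simp add: cong_0_iff)
  qed (use u Zp_unit_def in blast)
next
  assume x: "in_Zp p x \<and> \<not> qcong p x 0"
  then obtain r s where s: "\<not> int p dvd s" "x = of_int r / of_int s"
    using in_Zp_iff_fraction[OF p] by blast
  have "\<not> int p dvd r"
  proof
    assume "int p dvd r"
    then obtain k where "r = int p * k" by blast
    then have "x - 0 = of_nat p * (of_int k / of_int s)" using s by simp
    moreover have "in_Zp p (of_int k / of_int s)" using in_Zp_iff_fraction[OF p] s by blast
    ultimately show False using x unfolding qcong_def by blast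
  qed
  moreover have "r \<noteq> 0" "s \<noteq> 0" using calculation s by auto
  moreover have "inverse x = of_int s / of_int r" using s by simp
  ultimately show "Zp_unit p x" unfolding Zp_unit_def using x s in_Zp_iff_fraction[OF p] by auto
qed

lemma qcong_divide:
  assumes p: "prime p" and c: "Zp_unit p c" and "qcong p (c * x) y" shows "qcong p x (y / c)"
proof -
  have "qcong p (inverse c * (c * x)) (inverse c * y)"
    using qcong_mult_left[OF p _ assms(3)] c unfolding Zp_unit_def by blast
  moreover have "inverse c * (c * x) = x" "inverse c * y = y / c"
    using c by (auto simp: Zp_unit_def divide_inverse)
  ultimately show ?thesis by (simp only:)
qed

lemma qcong_cancel_left:
  assumes p: "prime p" and c: "Zp_unit p c" and "qcong p (c * x) (c * y)" shows "qcong p x y"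
  using qcong_divide[OF p c assms(3)] c by (simp add: Zp_unit_def)

lemma qcong_cancel_divide:
  assumes p: "prime p" and c: "Zp_unit p c" and d: "Zp_unit p d"
    and "qcong p (c * (d * x)) z" and "qcong p (c * y) z"
  shows "qcong p x (y / d)"
  using qcong_divide[OF p d qcong_cancel_left[OF p c qcong_trans[OF p assms(4) qcong_sym[OF p assms(5)]]]] .

lemma qcong_power_qLegendre:
  assumes p: "prime p" and pn: "p = 2 * n + 1" and x: "in_Zp p x"
  shows "qcong p (x ^ n) (of_int (qLegendre x p))"
proof -
  define r where "r = (SOME r :: int. qcong p (of_int r) x)"
  have r: "qcong p (of_int r) x"
    unfolding r_def using someI_ex[OF in_Zp_imp_qcong_of_int[OF p x]] .
  have "2 < p" using pn prime_gt_1_nat[OF p] by auto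
  then have "[Legendre r (int p) = r ^ n] (mod int p)"
    using euler_criterion[OF p] pn by simp
  then have "qcong p (of_int (Legendre r (int p))) (of_int r ^ n)"
    using qcong_of_int_iff[OF p] by (metis of_int_power)
  with qcong_power[OF p r x] show ?thesis
    unfolding qLegendre_def r_def[symmetric] using qcong_trans[OF p] qcong_sym[OF p] by blast
qed

lemma qLegendre_square:
  assumes p: "prime p" and u: "Zp_unit p x" shows "qLegendre x p ^ 2 = 1"
proof -
  define r where "r = (SOME r :: int. qcong p (of_int r) x)"
  have x: "in_Zp p x" "\<not> qcong p x 0" using u Zp_unit_iff[OF p] by blast+
  have r: "qcong p (of_int r) x"
    unfolding r_def using someI_ex[OF in_Zp_imp_qcong_of_int[OF p x(1)]] .
  have "\<not> [r = 0] (mod int p)"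
  proof
    assume "[r = 0] (mod int p)"
    then have "qcong p (of_int r) (of_int 0)" using qcong_of_int_iff[OF p] by blast
    then show False using x qcong_trans[OF p qcong_sym[OF p r]] by simp
  qed
  then show ?thesis unfolding qLegendre_def r_def[symmetric] Legendre_def by auto
qed

lemma qcong_power_mult_qLegendre:
  assumes p: "prime p" and pn: "p = 2 * n + 1" and u: "Zp_unit p x"
  shows "qcong p (x ^ n * of_int (qLegendre x p)) 1"
proof -
  have x: "in_Zp p x" using u Zp_unit_def by blast
  have "qcong p (x ^ n * of_int (qLegendre x p)) (of_int (qLegendre x p) * of_int (qLegendre x p))"
    using qcong_mult[OF p qcong_power_qLegendre[OF p pn x] qcong_refl[OF p]] x p
    by (auto simp: in_Zp_power)
  then show ?thesis
    using qLegendre_square[OF p u] by (metis of_int_1 of_int_mult power2_eq_square)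
qed

lemma binomial_even_odd_parts:
  fixes z w :: "'a::comm_ring_1"
  shows "(z + w)^n + (z - w)^n = 2 * (\<Sum>k\<le>n div 2. of_nat (n choose (2*k)) * w^(2*k) * z^(n - 2*k))"
    and "(z + w)^n - (z - w)^n = 2 * (\<Sum>k\<le>n div 2. of_nat (n choose (2*k+1)) * w^(2*k+1) * z^(n - (2*k+1)))"
proof -
  define m where "m = n div 2"
  have expand: "(z + v)^n = (\<Sum>i\<le>Suc (2*m). of_nat (n choose i) * v^i * z^(n-i))" for v
  proof -
    have "(z + v)^n = (\<Sum>i\<le>n. of_nat (n choose i) * v^i * z^(n-i))"
      using binomial_ring[of v z n] by (simp add: add.commute)
    also have "\<dots> = (\<Sum>i\<le>Suc (2*m). of_nat (n choose i) * v^i * z^(n-i))"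
      by (rule sum.mono_neutral_left) (auto simp: m_def binomial_eq_0)
    finally show ?thesis .
  qed
  have "(z + w)^n + (z + - w)^n
      = (\<Sum>k\<le>m. 2 * (of_nat (n choose (2*k)) * w^(2*k) * z^(n - 2*k)))"
    unfolding expand sum.distrib[symmetric] sum.in_pairs_0 by (intro sum.cong) auto
  then show "(z + w)^n + (z - w)^n = 2 * (\<Sum>k\<le>n div 2. of_nat (n choose (2*k)) * w^(2*k) * z^(n - 2*k))"
    by (simp add: m_def sum_distrib_left)
  have "(z + w)^n - (z + - w)^n
      = (\<Sum>k\<le>m. 2 * (of_nat (n choose (2*k+1)) * w^(2*k+1) * z^(n - (2*k+1))))"
    unfolding expand sum_subtractf[symmetric] sum.in_pairs_0 by (intro sum.cong) auto
  then show "(z + w)^n - (z - w)^n = 2 * (\<Sum>k\<le>n div 2. of_nat (n choose (2*k+1)) * w^(2*k+1) * z^(n - (2*k+1)))"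
    by (simp add: m_def sum_distrib_left)
qed

definition poly_function :: "('a::comm_semiring_1 \<Rightarrow> 'a) \<Rightarrow> bool" where
  "poly_function f \<longleftrightarrow> (\<exists>P. f = poly P)"

lemma poly_function_const [intro]: "poly_function (\<lambda>x. c)"
  unfolding poly_function_def by (intro exI[of _ "[:c:]"]) auto

lemma poly_function_id [intro]: "poly_function (\<lambda>x. x)"
  unfolding poly_function_def by (intro exI[of _ "[:0, 1:]"]) (auto simp: fun_eq_iff)

lemma poly_function_add [intro]:
  assumes "poly_function f" "poly_function g" shows "poly_function (\<lambda>x. f x + g x)"
proof -
  obtain P Q where "f = poly P" "g = poly Q" using assms unfolding poly_function_def by blast
  then show ?thesis unfolding poly_function_def by (intro exI[of _ "P + Q"]) (auto simp: fun_eq_iff)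
qed

lemma poly_function_mult [intro]:
  assumes "poly_function f" "poly_function g" shows "poly_function (\<lambda>x. f x * g x)"
proof -
  obtain P Q where "f = poly P" "g = poly Q" using assms unfolding poly_function_def by blast
  then show ?thesis unfolding poly_function_def by (intro exI[of _ "P * Q"]) (auto simp: fun_eq_iff)
qed

lemma poly_function_power [intro]:
  "poly_function f \<Longrightarrow> poly_function (\<lambda>x. f x ^ k)"
  by (induction k) auto

lemma poly_function_sum [intro]:
  "(\<And>i. i \<in> I \<Longrightarrow> poly_function (f i)) \<Longrightarrow> poly_function (\<lambda>x. \<Sum>i\<in>I. f i x)"
  by (induction I rule: infinite_finite_induct) auto

lemma poly_function_eq_on_squares:
  fixes f g :: "'a::{field_char_0} \<Rightarrow> 'a"
  assumes "poly_function f" "poly_function g" and eq: "\<And>x. x \<noteq> 0 \<Longrightarrow> f (x^2) = g (x^2)"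
  shows "f = g"
proof -
  obtain P Q where PQ: "f = poly P" "g = poly Q" using assms unfolding poly_function_def by blast
  have "poly (P - Q) (of_nat (Suc k) ^ 2) = 0" for k
    using eq[of "of_nat (Suc k)"] PQ by (simp del: of_nat_Suc)
  then have "range (\<lambda>k::nat. of_nat (Suc k) ^ 2 :: 'a) \<subseteq> {x. poly (P - Q) x = 0}" by auto
  moreover have "infinite (range (\<lambda>k::nat. of_nat (Suc k) ^ 2 :: 'a))"
  proof (rule range_inj_infinite, rule injI)
    fix k l :: nat assume "of_nat (Suc k) ^ 2 = (of_nat (Suc l) ^ 2 :: 'a)"
    then have "Suc k ^ 2 = Suc l ^ 2" by (metis of_nat_eq_iff of_nat_power)
    then show "k = l" using power2_eq_iff_nonneg[of "Suc k" "Suc l"] by simp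
  qed
  ultimately have "P - Q = 0" using poly_roots_finite finite_subset by blast
  then show ?thesis using PQ by simp
qed

lemma eq_on_squares_imp_eq:
  fixes F G :: "'a::{field_char_0} \<Rightarrow> 'a \<Rightarrow> 'a"
  assumes "\<And>A. poly_function (F A)" "\<And>A. poly_function (G A)"
    and "\<And>B. poly_function (\<lambda>A. F A B)" "\<And>B. poly_function (\<lambda>A. G A B)"
    and eq: "\<And>x y. x \<noteq> 0 \<Longrightarrow> y \<noteq> 0 \<Longrightarrow> F (x^2) (y^2) = G (x^2) (y^2)"
  shows "F A B = G A B"
proof -
  have "F (x^2) = G (x^2)" if "x \<noteq> 0" for x
    using poly_function_eq_on_squares[of "F (x^2)" "G (x^2)"] assms that by blast
  then have "(\<lambda>A. F A B) = (\<lambda>A. G A B)"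
    by (intro poly_function_eq_on_squares) (auto simp: assms)
  then show ?thesis by meson
qed

lemma even_part_binomial_identity:
  fixes A B :: "'a::field_char_0"
  shows "(\<Sum>k\<le>n div 2. of_nat (n choose (2*k)) * (4*A*B)^k * (A+B)^(n - 2*k))
       = (\<Sum>j\<le>n. of_nat (2*n choose (2*j)) * A^j * B^(n-j))"
proof (rule eq_on_squares_imp_eq[where A = A and B = B])
  fix x y :: 'a
  have sq: "(y + x)^2 = (x^2+y^2) + 2*x*y" "(y - x)^2 = (x^2+y^2) - 2*x*y"
    by (simp_all add: power2_eq_square algebra_simps)
  have "2 * (\<Sum>k\<le>n div 2. of_nat (n choose (2*k)) * (4*x^2*y^2)^k * (x^2+y^2)^(n - 2*k))
      = ((x^2+y^2) + 2*x*y)^n + ((x^2+y^2) - 2*x*y)^n"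
    by (simp add: binomial_even_odd_parts(1) power_mult_distrib power_mult)
  also have "\<dots> = (y + x)^(2*n) + (y - x)^(2*n)"
    by (simp only: sq power_mult)
  also have "\<dots> = 2 * (\<Sum>j\<le>n. of_nat (2*n choose (2*j)) * (x^2)^j * (y^2)^(n-j))"
    unfolding binomial_even_odd_parts(1) by (simp add: power_mult diff_mult_distrib2[symmetric] mult.assoc)
  finally show "(\<Sum>k\<le>n div 2. of_nat (n choose (2*k)) * (4*x^2*y^2)^k * (x^2+y^2)^(n - 2*k))
      = (\<Sum>j\<le>n. of_nat (2*n choose (2*j)) * (x^2)^j * (y^2)^(n-j))"
    by simp
qed (intro poly_function_sum poly_function_mult poly_function_power poly_function_add
    poly_function_const poly_function_id)+

lemma binomial_odd_part_squares:
  fixes x y :: "'a::comm_ring_1"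
  shows "(y + x)^(2*n) - (y - x)^(2*n)
       = 2*x*y * (\<Sum>j<n. of_nat (2*n choose (2*j+1)) * (x^2)^j * (y^2)^(n - Suc j))"
proof -
  have "(y + x)^(2*n) - (y - x)^(2*n) = 2 * (\<Sum>j\<le>n. of_nat (2*n choose (2*j+1)) * x^(2*j+1) * y^(2*n - (2*j+1)))"
    unfolding binomial_even_odd_parts(2) by simp
  also have "\<dots> = 2 * (\<Sum>j<n. of_nat (2*n choose (2*j+1)) * x^(2*j+1) * y^(2*n - (2*j+1)))"
    by (simp add: lessThan_Suc_atMost[symmetric] binomial_eq_0)
  also have "(\<Sum>j<n. of_nat (2*n choose (2*j+1)) * x^(2*j+1) * y^(2*n - (2*j+1)))
      = (\<Sum>j<n. x*y * (of_nat (2*n choose (2*j+1)) * (x^2)^j * (y^2)^(n - Suc j)))"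
  proof (rule sum.cong[OF refl])
    fix j assume "j \<in> {..<n}"
    then have "2*n - (2*j+1) = Suc (2*(n - Suc j))" by auto
    then have "y^(2*n - (2*j+1)) = y * (y^2)^(n - Suc j)" by (simp only: power_Suc power_mult)
    moreover have "x^(2*j+1) = x * (x^2)^j" by (metis Suc_eq_plus1 power_Suc power_mult)
    ultimately show "of_nat (2*n choose (2*j+1)) * x^(2*j+1) * y^(2*n - (2*j+1))
        = x*y * (of_nat (2*n choose (2*j+1)) * (x^2)^j * (y^2)^(n - Suc j))"
      by (simp only: mult_ac)
  qed
  finally show ?thesis by (simp add: sum_distrib_left mult.assoc)
qed

lemma odd_part_binomial_identity:
  fixes A B :: "'a::field_char_0"
  shows "2 * (\<Sum>k\<le>n div 2. of_nat (n choose (2*k+1)) * (4*A*B)^k * (A+B)^(n - (2*k+1)))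
       = (\<Sum>j<n. of_nat (2*n choose (2*j+1)) * A^j * B^(n - Suc j))"
proof (rule eq_on_squares_imp_eq[where A = A and B = B])
  fix x y :: 'a assume "x \<noteq> 0" "y \<noteq> 0"
  have sq: "(y + x)^2 = (x^2+y^2) + 2*x*y" "(y - x)^2 = (x^2+y^2) - 2*x*y"
    by (simp_all add: power2_eq_square algebra_simps)
  have "(2*x*y)^(2*k+1) = 2*x*y * ((2*x*y)^2)^k" for k
    by (simp add: power_mult)
  also have "(2*x*y)^2 = 4*x^2*y^2" by (simp add: power_mult_distrib)
  finally have w: "(2*x*y)^(2*k+1) = 2*x*y * (4*x^2*y^2)^k" for k .
  have "2*x*y * (2 * (\<Sum>k\<le>n div 2. of_nat (n choose (2*k+1)) * (4*x^2*y^2)^k * (x^2+y^2)^(n - (2*k+1))))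
      = ((x^2+y^2) + 2*x*y)^n - ((x^2+y^2) - 2*x*y)^n"
    unfolding binomial_even_odd_parts(2) w by (simp add: sum_distrib_left mult_ac)
  also have "\<dots> = (y + x)^(2*n) - (y - x)^(2*n)"
    by (simp only: sq power_mult)
  also have "\<dots> = 2*x*y * (\<Sum>j<n. of_nat (2*n choose (2*j+1)) * (x^2)^j * (y^2)^(n - Suc j))"
    by (rule binomial_odd_part_squares)
  finally show "2 * (\<Sum>k\<le>n div 2. of_nat (n choose (2*k+1)) * (4*x^2*y^2)^k * (x^2+y^2)^(n - (2*k+1)))
      = (\<Sum>j<n. of_nat (2*n choose (2*j+1)) * (x^2)^j * (y^2)^(n - Suc j))"
    using \<open>x \<noteq> 0\<close> \<open>y \<noteq> 0\<close> by simp
qed (intro poly_function_sum poly_function_mult poly_function_power poly_function_add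
    poly_function_const poly_function_id)+

lemma binomial_pred_prime_cong:
  assumes p: "prime p" and "k < p"
  shows "[int ((p - 1) choose k) = (-1)^k] (mod int p)"
  using assms(2)
proof (induction k)
  case (Suc k)
  have "p dvd (p choose Suc k)" using dvd_choose_prime[OF Suc.prems] p by auto
  moreover have "p choose Suc k = ((p - 1) choose k) + ((p - 1) choose Suc k)"
    using binomial_Suc_Suc[of "p - 1" k] prime_gt_0_nat[OF p] by simp
  ultimately have "int p dvd int ((p - 1) choose Suc k) - (- int ((p - 1) choose k))"
    by (metis int_dvd_int_iff of_nat_add diff_minus_eq_add add.commute)
  then have "[int ((p - 1) choose Suc k) = - int ((p - 1) choose k)] (mod int p)"
    by (simp add: cong_iff_dvd_diff)
  moreover have "[- int ((p - 1) choose k) = - ((-1)^k)] (mod int p)"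
    using Suc by (simp add: cong_minus_minus_iff)
  ultimately show ?case by (auto intro: cong_trans)
qed simp

lemma qcong_binomial_pred_prime:
  assumes p: "prime p" and "k < p"
  shows "qcong p (of_nat ((p - 1) choose k)) ((-1)^k)"
proof -
  have "qcong p (of_int (int ((p - 1) choose k))) (of_int ((-1)^k))"
    using binomial_pred_prime_cong[OF assms] qcong_of_int_iff[OF p] by blast
  then show ?thesis by simp
qed

lemma central_binomial_Suc: "Suc j * (2 * Suc j choose Suc j) = 2 * (2 * j + 1) * (2 * j choose j)"
proof -
  let ?X = "Suc (2 * j) choose j"
  have two: "2 * Suc j = Suc (Suc (2 * j))" by simp
  have sym: "Suc (2 * j) choose Suc j = ?X"
    using binomial_symmetric[of "Suc j" "Suc (2 * j)"] by simp
  have "Suc j * (Suc j * (2 * Suc j choose Suc j)) = Suc j * (2 * Suc j * ?X)"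
    using Suc_times_binomial[of j "Suc (2 * j)"] by (simp only: two)
  also have "\<dots> = 2 * Suc j * (Suc j * ?X)" by (simp only: mult_ac)
  also have "Suc j * ?X = Suc (2 * j) * (2 * j choose j)"
    using Suc_times_binomial[of j "2 * j", unfolded sym] .
  finally have "Suc j * (Suc j * (2 * Suc j choose Suc j)) = Suc j * (2 * (2 * j + 1) * (2 * j choose j))"
    by (simp only: mult_ac Suc_eq_plus1)
  then show ?thesis by (metis mult_left_cancel nat.simps(3))
qed

lemma central_binomial_cong:
  assumes p: "prime p" and pn: "p = 2 * n + 1" and "j \<le> n"
  shows "[int (2 * j choose j) = (-4)^j * int (n choose j)] (mod int p)"
  using assms(3)
proof (induction j)
  case (Suc j)
  have "int (Suc j) * int (2 * Suc j choose Suc j) = 2 * (2 * int j + 1) * int (2 * j choose j)"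
    using arg_cong[OF central_binomial_Suc[of j], of int]
    by (simp del: binomial_Suc_Suc add: algebra_simps)
  also have "[\<dots> = (2 * (2 * int j + 1) - 2 * int p) * ((-4)^j * int (n choose j))] (mod int p)"
    using Suc by (intro cong_mult) (auto simp: cong_iff_dvd_diff)
  also have "(2 * (2 * int j + 1) - 2 * int p) * ((-4)^j * int (n choose j))
      = (-4)^Suc j * (int (n - j) * int (n choose j))"
    using pn Suc.prems by (simp add: algebra_simps of_nat_diff)
  also have "int (n - j) * int (n choose j) = int (Suc j) * int (n choose Suc j)"
    using binomial_absorption[of j n] binomial_absorb_comp[of n j] by (metis of_nat_mult)
  finally have "[int (Suc j) * int (2 * Suc j choose Suc j) = int (Suc j) * ((-4)^Suc j * int (n choose Suc j))] (mod int p)"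
    by (simp add: mult_ac)
  moreover have "\<not> p dvd Suc j" using Suc.prems pn by (auto dest: dvd_imp_le)
  then have "coprime (Suc j) p" using prime_imp_coprime[OF p] by (metis coprime_commute)
  then have "coprime (int (Suc j)) (int p)" by (simp only: coprime_int_iff)
  ultimately show ?case using cong_mult_lcancel by blast
qed simp

lemma sum_binomial_4k_2k_reduce_cong:
  assumes p: "prime p" and pn: "p = 2 * n + 1" and y: "in_Zp p y"
  shows "qcong p (\<Sum>k=0..p div 4. of_nat (4*k choose 2*k) * y^k)
                 (\<Sum>k\<le>n div 2. of_nat (n choose 2*k) * (16*y)^k)"
proof -
  have "qcong p (of_nat (4*k choose 2*k) * y^k) (of_nat (n choose 2*k) * (16*y)^k)"
    if "k \<le> n div 2" for k
  proof -
    have "[int (2 * (2*k) choose 2*k) = (-4)^(2*k) * int (n choose 2*k)] (mod int p)"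
      using central_binomial_cong[OF p pn, of "2 * k"] that by simp
    then have "[int (4*k choose 2*k) = 16^k * int (n choose 2*k)] (mod int p)"
      by (simp add: power_mult)
    then have "qcong p (of_int (int (4*k choose 2*k))) (of_int (16^k * int (n choose 2*k)))"
      using qcong_of_int_iff[OF p] by blast
    then have "qcong p (y^k * of_nat (4*k choose 2*k)) (y^k * (16^k * of_nat (n choose 2*k)))"
      using qcong_mult_left[OF p in_Zp_power[OF p y]] by simp
    then show ?thesis by (simp add: power_mult_distrib mult_ac)
  qed
  moreover have "p div 4 = n div 2" using pn by presburger
  ultimately show ?thesis unfolding atLeast0AtMost by (auto intro: qcong_sum[OF p])
qed

lemma even_part_binomial_cong:
  assumes p: "prime p" and pn: "p = 2 * n + 1" and A: "in_Zp p A" and B: "in_Zp p B"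
  shows "qcong p ((A - B) * (\<Sum>k\<le>n div 2. of_nat (n choose (2*k)) * (4*A*B)^k * (A+B)^(n - 2*k)))
                 (A^(n+1) - B^(n+1))"
proof -
  have "qcong p (of_nat (2*n choose (2*j)) * (A^j * B^(n-j))) (1 * (A^j * B^(n-j)))" if "j \<le> n" for j
    using qcong_binomial_pred_prime[OF p, of "2*j"] that pn A B p
    by (intro qcong_mult) (auto simp: in_Zp_mult in_Zp_power)
  then have "qcong p (\<Sum>j\<le>n. of_nat (2*n choose (2*j)) * A^j * B^(n-j)) (\<Sum>j\<le>n. A^j * B^(n-j))"
    by (auto simp: mult.assoc intro: qcong_sum[OF p])
  then have "qcong p ((A - B) * (\<Sum>j\<le>n. of_nat (2*n choose (2*j)) * A^j * B^(n-j)))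
                     ((A - B) * (\<Sum>j\<le>n. A^j * B^(n-j)))"
    using A B p by (intro qcong_mult_left) auto
  moreover have "(A - B) * (\<Sum>j\<le>n. A^j * B^(n-j)) = A^(n+1) - B^(n+1)"
    using diff_power_eq_sum[of A n B] by (simp add: lessThan_Suc_atMost)
  ultimately show ?thesis by (simp only: even_part_binomial_identity)
qed

lemma odd_part_binomial_cong:
  assumes p: "prime p" and pn: "p = 2 * n + 1" and A: "in_Zp p A" and B: "in_Zp p B"
  shows "qcong p (2 * (A - B) * (\<Sum>k\<le>n div 2. of_nat (n choose (2*k+1)) * (4*A*B)^k * (A+B)^(n - (2*k+1))))
                 (B^n - A^n)"
proof -
  have "qcong p (of_nat (2*n choose (2*j+1)) * (A^j * B^(n - Suc j))) (-1 * (A^j * B^(n - Suc j)))"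
    if "j < n" for j
    using qcong_binomial_pred_prime[OF p, of "2*j+1"] that pn A B p
    by (intro qcong_mult) (auto simp: in_Zp_mult in_Zp_power)
  then have "qcong p (\<Sum>j<n. of_nat (2*n choose (2*j+1)) * A^j * B^(n - Suc j))
                     (\<Sum>j<n. - (A^j * B^(n - Suc j)))"
    by (auto simp: mult.assoc intro: qcong_sum[OF p])
  then have "qcong p ((A - B) * (\<Sum>j<n. of_nat (2*n choose (2*j+1)) * A^j * B^(n - Suc j)))
                     ((A - B) * (\<Sum>j<n. - (A^j * B^(n - Suc j))))"
    using A B p by (intro qcong_mult_left) auto
  moreover have "(A - B) * (\<Sum>j<n. - (A^j * B^(n - Suc j))) = B^n - A^n"
    using power_diff_sumr2[of A n B] by (simp add: sum_negf mult_ac)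
  moreover have "2 * (A - B) * (\<Sum>k\<le>n div 2. of_nat (n choose (2*k+1)) * (4*A*B)^k * (A+B)^(n - (2*k+1)))
      = (A - B) * (\<Sum>j<n. of_nat (2*n choose (2*j+1)) * A^j * B^(n - Suc j))"
    unfolding odd_part_binomial_identity[symmetric] by (simp only: mult_ac)
  ultimately show ?thesis by (simp only:)
qed

lemma two_power_cong:
  assumes p: "prime p" and pn: "p = 2 * n + 1"
  shows "qcong p ((-1)^((n+1) div 2) * 2^n) 1"
proof -
  have last: "(\<Sum>k\<le>N. f k) = f N" if "\<And>k. k < N \<Longrightarrow> f k = 0" for N and f :: "nat \<Rightarrow> rat"
    using that by (simp add: lessThan_Suc_atMost[symmetric])
  have u2: "Zp_unit p 2" using Zp_unit_two[OF p] pn by simp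
  have m1: "in_Zp p (-1)" using p by (simp add: in_Zp_uminus)
  (* At A = -1, B = 1 we have A + B = 0, so only the last summand survives. *)
  show ?thesis
  proof (cases "even n")
    case True
    then obtain N where N: "n = 2 * N" by blast
    have "qcong p ((-1 - 1) * (\<Sum>k\<le>N. of_nat (n choose (2*k)) * (-4)^k * 0^(n - 2*k))) ((-1)^(n+1) - 1)"
      using even_part_binomial_cong[OF p pn m1 in_Zp_1[OF p]] N by simp
    also have "(\<Sum>k\<le>N. of_nat (n choose (2*k)) * (-4)^k * (0::rat)^(n - 2*k)) = (-4)^N"
      using N by (subst last) auto
    finally have "qcong p (- 2 * (-4)^N) (- 2 * 1)" using N by simp
    then have "qcong p ((-4)^N) 1" using qcong_cancel_left[OF p Zp_unit_uminus[OF p u2]] by blast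
    then show ?thesis using N by (simp add: power_mult power_mult_distrib[symmetric])
  next
    case False
    then obtain N where N: "n = 2 * N + 1" using oddE by blast
    have "qcong p (2 * (-1 - 1) * (\<Sum>k\<le>N. of_nat (n choose (2*k+1)) * (-4)^k * 0^(n - (2*k+1))))
                  (1^n - (-1)^n)"
      using odd_part_binomial_cong[OF p pn m1 in_Zp_1[OF p]] N by simp
    also have "(\<Sum>k\<le>N. of_nat (n choose (2*k+1)) * (-4)^k * (0::rat)^(n - (2*k+1))) = (-4)^N"
      using N by (subst last) auto
    finally have "qcong p (2 * ((-1)^(N+1) * 2^n)) (2 * 1)"
      using N by (simp add: power_mult power_mult_distrib[symmetric] power_add)
    then show ?thesis using qcong_cancel_left[OF p u2] N by simp
  qed
qed

lemma even_part_binomial_qLegendre_cong: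
  assumes p: "prime p" and pn: "p = 2 * n + 1" and A: "in_Zp p A" and B: "in_Zp p B"
  shows "qcong p ((A - B) * (\<Sum>k\<le>n div 2. of_nat (n choose (2*k)) * (4*A*B)^k * (A+B)^(n - 2*k)))
                 (A * of_int (qLegendre A p) - B * of_int (qLegendre B p))"
proof -
  have "qcong p (A * A^n - B * B^n) (A * of_int (qLegendre A p) - B * of_int (qLegendre B p))"
    using qcong_power_qLegendre[OF p pn] A B by (intro qcong_diff[OF p] qcong_mult_left[OF p]) auto
  then show ?thesis using even_part_binomial_cong[OF assms] qcong_trans[OF p] by simp
qed

lemma odd_part_binomial_qLegendre_cong:
  assumes p: "prime p" and pn: "p = 2 * n + 1" and A: "in_Zp p A" and B: "in_Zp p B"
  shows "qcong p (2 * (A - B) * (\<Sum>k\<le>n div 2. of_nat (n choose (2*k+1)) * (4*A*B)^k * (A+B)^(n - (2*k+1))))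
                 (of_int (qLegendre B p) - of_int (qLegendre A p))"
  using odd_part_binomial_cong[OF assms] qcong_diff[OF p] qcong_power_qLegendre[OF p pn] A B qcong_trans[OF p]
  by blast

lemma power_four_mult_neg:
  fixes A B :: "'a::comm_ring_1"
  shows "(4*A*B)^N * (- (A * B))^N = (-1)^N * 2^(2 * N) * (A * B)^(2 * N)"
proof -
  have "(4*A*B) * (- (A * B)) = -1 * (2 * (A * B))^2" by (simp add: power2_eq_square)
  then have "(4*A*B)^N * (- (A * B))^N = (-1 * (2 * (A * B))^2)^N" by (metis power_mult_distrib)
  also have "\<dots> = (-1)^N * 2^(2 * N) * (A * B)^(2 * N)" by (simp only: power_mult_distrib power_mult mult.assoc)
  finally show ?thesis .
qed

lemma power_four_mult_neg_Suc:
  fixes A B :: "'a::comm_ring_1"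
  shows "2 * (4*A*B)^N * (- (A * B))^(N + 1) = (-1)^(N + 1) * 2^(2 * N + 1) * (A * B)^(2 * N + 1)"
proof -
  have "2 * (4*A*B)^N * (- (A * B))^(N + 1) = (-1) * (2 * (A * B)) * ((4*A*B)^N * (- (A * B))^N)"
    by (simp add: mult_ac)
  then show ?thesis unfolding power_four_mult_neg by (simp add: power_add power_mult_distrib mult_ac)
qed

lemma two_power_qLegendre_cong:
  assumes p: "prime p" and pn: "p = 2 * n + 1" and uA: "Zp_unit p A" and uB: "Zp_unit p B"
  shows "qcong p ((-1)^((n+1) div 2) * 2^n * (A * B)^n * (of_int (qLegendre A p) * of_int (qLegendre B p))) 1"
proof -
  have "qcong p ((A^n * of_int (qLegendre A p)) * (B^n * of_int (qLegendre B p))) (1 * 1)"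
    using qcong_power_mult_qLegendre[OF p pn] uA uB p
    by (intro qcong_mult[OF p]) (auto simp: Zp_unit_def in_Zp_mult in_Zp_power)
  then have "qcong p ((-1)^((n+1) div 2) * 2^n * ((A * B)^n * (of_int (qLegendre A p) * of_int (qLegendre B p))))
      (1 * 1)"
    using two_power_cong[OF p pn] p
    by (intro qcong_mult[OF p]) (auto simp: power_mult_distrib mult_ac in_Zp_mult in_Zp_power in_Zp_uminus)
  then show ?thesis by (simp only: mult.assoc mult_1)
qed

lemma binomial_4k_2k_sum_cong:
  assumes p: "prime p" and "odd p" and A: "in_Zp p A" and B: "in_Zp p B"
    and uS: "Zp_unit p (A + B)" and uD: "Zp_unit p (A - B)"
  shows "qcong p (\<Sum>k=0..p div 4. of_nat (4*k choose 2*k) * (A * B / (4 * (A + B)^2))^k)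
           (1 / (A - B) * of_int (qLegendre (A + B) p)
              * (A * of_int (qLegendre A p) - B * of_int (qLegendre B p)))"
    (is "qcong p ?S (1 / (A - B) * ?e * ?X)")
proof -
  obtain n where pn: "p = 2 * n + 1" using \<open>odd p\<close> oddE by blast
  define f where "f = (\<Sum>k\<le>n div 2. of_nat (n choose (2*k)) * (4*A*B / (A + B)^2)^k)"
  have u2: "Zp_unit p 2" using Zp_unit_two[OF p \<open>odd p\<close>] .
  have y: "in_Zp p (A * B / (4 * (A + B)^2))"
    using Zp_unit_mult[OF p Zp_unit_mult[OF p u2 u2] Zp_unit_power[OF p uS]] p A B
    by (intro in_Zp_divide) (auto simp: in_Zp_mult)
  have y16: "16 * (A * B / (4 * (A + B)^2)) = 4*A*B / (A + B)^2"
    using uS by (simp add: Zp_unit_def field_simps)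
  have S: "qcong p ?S f"
    using sum_binomial_4k_2k_reduce_cong[OF p pn y] unfolding y16 f_def .
  have "(A + B)^n * (4*A*B / (A + B)^2)^k = (4*A*B)^k * (A+B)^(n - 2*k)" if "k \<le> n div 2" for k
  proof -
    have "(A + B)^n = ((A + B)^2)^k * (A+B)^(n - 2*k)"
      using that by (simp add: power_mult[symmetric] power_add[symmetric])
    then show ?thesis using uS unfolding Zp_unit_def by (simp add: power_divide)
  qed
  then have "(A + B)^n * f = (\<Sum>k\<le>n div 2. of_nat (n choose (2*k)) * (4*A*B)^k * (A+B)^(n - 2*k))"
    unfolding f_def sum_distrib_left by (intro sum.cong) (auto simp: mult_ac)
  then have "qcong p ((A - B) * ((A + B)^n * f)) ?X"
    using even_part_binomial_qLegendre_cong[OF p pn A B] by simp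
  then have lhs: "qcong p ((A + B)^n * ((A - B) * f)) ?X" by (simp only: mult.left_commute)
  have "in_Zp p ?X" using p A B by (intro in_Zp_diff in_Zp_mult) auto
  then have rhs: "qcong p ((A + B)^n * (?e * ?X)) ?X"
    using qcong_mult[OF p qcong_power_mult_qLegendre[OF p pn uS] qcong_refl[OF p]] p uS
    by (auto simp: mult.assoc Zp_unit_def in_Zp_power in_Zp_mult)
  have "qcong p f (?e * ?X / (A - B))"
    by (rule qcong_cancel_divide[OF p Zp_unit_power[OF p uS] uD lhs rhs])
  then show ?thesis using qcong_trans[OF p S] by simp
qed

lemma sum_power_divide_reverse:
  fixes v w :: "'a::field"
  assumes "w \<noteq> 0"
  shows "w^N * (\<Sum>k\<le>N. c k * (v / w)^k) = (\<Sum>k\<le>N. c (N - k) * w^k * v^(N - k))"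
proof -
  have "w^N * (c k * (v / w)^k) = c k * v^k * w^(N - k)" if "k \<le> N" for k
  proof -
    have "w^N = w^k * w^(N - k)" using that by (simp flip: power_add)
    then show ?thesis using assms by (simp add: power_divide)
  qed
  then have "w^N * (\<Sum>k\<le>N. c k * (v / w)^k) = (\<Sum>k\<le>N. c k * v^k * w^(N - k))"
    unfolding sum_distrib_left by (intro sum.cong) auto
  also have "\<dots> = (\<Sum>k\<le>N. c (N - k) * v^(N - k) * w^(N - (N - k)))"
    using sum.atLeastAtMost_rev[of "\<lambda>k. c k * v^k * w^(N - k)" 0 N] by (simp add: atLeast0AtMost)
  also have "\<dots> = (\<Sum>k\<le>N. c (N - k) * w^k * v^(N - k))"
    by (intro sum.cong) (auto simp: mult_ac)
  finally show ?thesis .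
qed

lemma sum_even_binomial_reciprocal:
  fixes v w :: "'a::field"
  assumes "w \<noteq> 0" and n: "n = 2 * N"
  shows "w^N * (\<Sum>k\<le>N. of_nat (n choose (2*k)) * (v^2 / w)^k)
       = (\<Sum>k\<le>n div 2. of_nat (n choose (2*k)) * w^k * v^(n - 2*k))"
  unfolding sum_power_divide_reverse[OF assms(1)]
proof (rule sum.cong)
  fix k assume "k \<in> {..n div 2}"
  then show "of_nat (n choose (2*(N - k))) * w^k * (v^2)^(N - k) = of_nat (n choose (2*k)) * w^k * v^(n - 2*k)"
    using binomial_symmetric[of "2*k" n] n by (auto simp: power_mult[symmetric] diff_mult_distrib2)
qed (simp add: n)

lemma sum_odd_binomial_reciprocal:
  fixes v w :: "'a::field"
  assumes "w \<noteq> 0" and n: "n = 2 * N + 1"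
  shows "w^N * (\<Sum>k\<le>N. of_nat (n choose (2*k)) * (v^2 / w)^k)
       = (\<Sum>k\<le>n div 2. of_nat (n choose (2*k+1)) * w^k * v^(n - (2*k+1)))"
  unfolding sum_power_divide_reverse[OF assms(1)]
proof (rule sum.cong)
  fix k assume "k \<in> {..n div 2}"
  then show "of_nat (n choose (2*(N - k))) * w^k * (v^2)^(N - k) = of_nat (n choose (2*k+1)) * w^k * v^(n - (2*k+1))"
    using binomial_symmetric[of "2*(N - k)" n] n by (auto simp: power_mult[symmetric] diff_mult_distrib2)
qed (simp add: n)

lemma sum_binomial_4k_2k_reciprocal_reduce_cong:
  assumes p: "prime p" and pn: "p = 2 * n + 1" and uA: "Zp_unit p A" and uB: "Zp_unit p B"
  shows "qcong p (\<Sum>k=0..p div 4. of_nat (4*k choose 2*k) * ((A + B)^2 / (64 * A * B))^k)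
                 (\<Sum>k\<le>n div 2. of_nat (n choose (2*k)) * ((A + B)^2 / (4*A*B))^k)"
proof -
  have u2: "Zp_unit p 2" using Zp_unit_two[OF p] pn by simp
  have "Zp_unit p (2^6 * A * B)" using Zp_unit_mult[OF p Zp_unit_mult[OF p Zp_unit_power[OF p u2] uA] uB] .
  then have y: "in_Zp p ((A + B)^2 / (64 * A * B))"
    using p uA uB by (intro in_Zp_divide) (auto simp: Zp_unit_def in_Zp_power)
  have y16: "16 * ((A + B)^2 / (64 * A * B)) = (A + B)^2 / (4*A*B)" by (simp add: mult.assoc)
  show ?thesis using sum_binomial_4k_2k_reduce_cong[OF p pn y] unfolding y16 .
qed

lemma binomial_4k_2k_sum_reciprocal_cong_1mod4:
  assumes p: "prime p" and p4: "p mod 4 = 1"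
    and uA: "Zp_unit p A" and uB: "Zp_unit p B" and uD: "Zp_unit p (A - B)"
  shows "qcong p (\<Sum>k=0..p div 4. of_nat (4*k choose 2*k) * ((A + B)^2 / (64 * A * B))^k)
           (1 / (A - B) * (A * of_int (qLegendre B p) - B * of_int (qLegendre A p)) * (- (A * B))^((p - 1) div 4))"
proof -
  define N where "N = p div 4"
  define n where "n = 2 * N"
  define eA eB where "eA = (of_int (qLegendre A p) :: rat)" and "eB = (of_int (qLegendre B p) :: rat)"
  define g where "g = (\<Sum>k\<le>N. of_nat (n choose (2*k)) * ((A + B)^2 / (4*A*B))^k)"
  have pn: "p = 2 * n + 1" and N: "(p - 1) div 4 = N" "n div 2 = N" "(n + 1) div 2 = N"
    using p4 unfolding n_def N_def by presburger+
  have A: "in_Zp p A" and B: "in_Zp p B" using uA uB Zp_unit_def by auto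
  have u2: "Zp_unit p 2" using Zp_unit_two[OF p] pn by simp
  have u4: "Zp_unit p (4*A*B)" using Zp_unit_mult[OF p Zp_unit_mult[OF p Zp_unit_mult[OF p u2 u2] uA] uB] by simp
  have "(4*A*B)^N * g = (\<Sum>k\<le>n div 2. of_nat (n choose (2*k)) * (4*A*B)^k * (A+B)^(n - 2*k))"
    unfolding g_def using u4 n_def by (intro sum_even_binomial_reciprocal) (auto simp: Zp_unit_def)
  then have "qcong p ((A - B) * ((4*A*B)^N * g)) (A * eA - B * eB)"
    using even_part_binomial_qLegendre_cong[OF p pn A B] unfolding eA_def eB_def by simp
  then have lhs: "qcong p ((4*A*B)^N * ((A - B) * g)) (A * eA - B * eB)" by (simp only: mult.left_commute)
  have "eA * eA = 1" "eB * eB = 1"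
    using qLegendre_square[OF p uA] qLegendre_square[OF p uB] unfolding eA_def eB_def
    by (metis of_int_1 of_int_mult power2_eq_square)+
  then have Z: "(eA * eB) * (A * eA - B * eB) = A * eB - B * eA" by (simp add: algebra_simps)
  have ex: "(4*A*B)^N * ((A * eB - B * eA) * (- (A * B))^N)
      = ((-1)^((n+1) div 2) * 2^n * (A * B)^n * (eA * eB)) * (A * eA - B * eB)"
    unfolding N(3) unfolding n_def Z[symmetric] power_four_mult_neg[symmetric] by (simp only: mult_ac)
  have e: "in_Zp p eA" "in_Zp p eB" unfolding eA_def eB_def using p by simp_all
  have rhs: "qcong p ((4*A*B)^N * ((A * eB - B * eA) * (- (A * B))^N)) (A * eA - B * eB)"
    unfolding ex using qcong_mult[OF p two_power_qLegendre_cong[OF p pn uA uB, folded eA_def eB_def]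
      qcong_refl[OF p, of "A * eA - B * eB"]] p A B e
    by (simp add: in_Zp_mult in_Zp_power in_Zp_uminus in_Zp_diff)
  have "qcong p g ((A * eB - B * eA) * (- (A * B))^N / (A - B))"
    by (rule qcong_cancel_divide[OF p Zp_unit_power[OF p u4] uD lhs rhs])
  then show ?thesis
    using qcong_trans[OF p sum_binomial_4k_2k_reciprocal_reduce_cong[OF p pn uA uB]] N
    unfolding eA_def eB_def g_def by simp
qed

lemma binomial_4k_2k_sum_reciprocal_cong_3mod4:
  assumes p: "prime p" and p4: "p mod 4 = 3"
    and uA: "Zp_unit p A" and uB: "Zp_unit p B" and uD: "Zp_unit p (A - B)"
  shows "qcong p (\<Sum>k=0..p div 4. of_nat (4*k choose 2*k) * ((A + B)^2 / (64 * A * B))^k)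
           (1 / (A - B) * (of_int (qLegendre A p) - of_int (qLegendre B p)) * (- (A * B))^((p + 1) div 4))"
proof -
  define N where "N = p div 4"
  define n where "n = 2 * N + 1"
  define eA eB where "eA = (of_int (qLegendre A p) :: rat)" and "eB = (of_int (qLegendre B p) :: rat)"
  define g where "g = (\<Sum>k\<le>N. of_nat (n choose (2*k)) * ((A + B)^2 / (4*A*B))^k)"
  have pn: "p = 2 * n + 1" and N: "(p + 1) div 4 = N + 1" "n div 2 = N" "(n + 1) div 2 = N + 1"
    using p4 unfolding n_def N_def by presburger+
  have A: "in_Zp p A" and B: "in_Zp p B" using uA uB Zp_unit_def by auto
  have u2: "Zp_unit p 2" using Zp_unit_two[OF p] pn by simp
  have u4: "Zp_unit p (4*A*B)" using Zp_unit_mult[OF p Zp_unit_mult[OF p Zp_unit_mult[OF p u2 u2] uA] uB] by simp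
  have "(4*A*B)^N * g = (\<Sum>k\<le>n div 2. of_nat (n choose (2*k+1)) * (4*A*B)^k * (A+B)^(n - (2*k+1)))"
    unfolding g_def using u4 n_def by (intro sum_odd_binomial_reciprocal) (auto simp: Zp_unit_def)
  then have "qcong p (2 * (A - B) * ((4*A*B)^N * g)) (eB - eA)"
    using odd_part_binomial_qLegendre_cong[OF p pn A B] unfolding eA_def eB_def by simp
  then have lhs: "qcong p ((2 * (4*A*B)^N) * ((A - B) * g)) (eB - eA)" by (simp only: mult_ac)
  have "eA * eA = 1" "eB * eB = 1"
    using qLegendre_square[OF p uA] qLegendre_square[OF p uB] unfolding eA_def eB_def
    by (metis of_int_1 of_int_mult power2_eq_square)+
  then have Z: "(eA * eB) * (eB - eA) = eA - eB" by (simp add: algebra_simps)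
  have sign: "2 * (4*A*B)^N * (- (A * B))^(N + 1) = (-1)^(N + 1) * 2^n * (A * B)^n"
    unfolding n_def by (rule power_four_mult_neg_Suc)
  have ex: "(2 * (4*A*B)^N) * ((eA - eB) * (- (A * B))^(N + 1))
      = ((-1)^((n+1) div 2) * 2^n * (A * B)^n * (eA * eB)) * (eB - eA)"
    unfolding N(3) Z[symmetric] sign[symmetric] by (simp only: mult_ac)
  have e: "in_Zp p eA" "in_Zp p eB" unfolding eA_def eB_def using p by simp_all
  have rhs: "qcong p ((2 * (4*A*B)^N) * ((eA - eB) * (- (A * B))^(N + 1))) (eB - eA)"
    unfolding ex using qcong_mult[OF p two_power_qLegendre_cong[OF p pn uA uB, folded eA_def eB_def]
      qcong_refl[OF p, of "eB - eA"]] p A B e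
    by (simp add: in_Zp_mult in_Zp_power in_Zp_uminus in_Zp_diff)
  have "qcong p g ((eA - eB) * (- (A * B))^(N + 1) / (A - B))"
    by (rule qcong_cancel_divide[OF p Zp_unit_mult[OF p u2 Zp_unit_power[OF p u4]] uD lhs rhs])
  then show ?thesis
    using qcong_trans[OF p sum_binomial_4k_2k_reciprocal_reduce_cong[OF p pn uA uB]] N
    unfolding eA_def eB_def g_def by simp
qed

theorem theorem2p4:
  fixes p :: nat and a b :: rat
  assumes "prime p" and "odd p"
    and "in_Zp p a" and "in_Zp p b"
    and "\<not> qcong p (a * b * (a^2 - b^2)) 0"
  shows "qcong p
           (\<Sum>k=0..p div 4. of_nat ((4*k) choose (2*k)) * ((a^2 - b^2) / (16 * a^2))^k)
           (1 / (2*b) * of_int (qLegendre (2*a) p) *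
              ((a + b) * of_int (qLegendre (a + b) p) - (a - b) * of_int (qLegendre (a - b) p)))
       \<and> (4 dvd p - 1 \<longrightarrow> qcong p
           (\<Sum>k=0..p div 4. of_nat ((4*k) choose (2*k)) * (a^2 / (16 * (a^2 - b^2)))^k)
           (1 / (2*b) * ((a + b) * of_int (qLegendre (a - b) p) - (a - b) * of_int (qLegendre (a + b) p))
              * (b^2 - a^2) ^ ((p - 1) div 4)))
       \<and> (4 dvd p - 3 \<longrightarrow> qcong p
           (\<Sum>k=0..p div 4. of_nat ((4*k) choose (2*k)) * (a^2 / (16 * (a^2 - b^2)))^k)
           (1 / (2*b) * (of_int (qLegendre (a + b) p) - of_int (qLegendre (a - b) p))
              * (b^2 - a^2) ^ ((p + 1) div 4)))"
proof -
  note p = \<open>prime p\<close>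
  have fac: "a * b * (a^2 - b^2) = a * b * ((a + b) * (a - b))" by (simp add: power2_eq_square algebra_simps)
  have "in_Zp p (a * b * (a^2 - b^2))" using p assms(3,4) by (simp add: in_Zp_mult in_Zp_diff in_Zp_power)
  then have "Zp_unit p (a * b * ((a + b) * (a - b)))"
    unfolding fac[symmetric] using assms(5) Zp_unit_iff[OF p] by blast
  then have ua: "Zp_unit p a" and ub: "Zp_unit p b" and uS: "Zp_unit p (a + b)" and uD: "Zp_unit p (a - b)"
    using p assms(3,4) by (simp_all add: Zp_unit_mult_iff in_Zp_mult in_Zp_add in_Zp_diff)
  have u2a: "Zp_unit p (2 * a)" and u2b: "Zp_unit p (2 * b)"
    using Zp_unit_two[OF p \<open>odd p\<close>] ua ub by (simp_all add: Zp_unit_mult[OF p])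
  have sum: "a + b + (a - b) = 2 * a" and diff: "a + b - (a - b) = 2 * b"
    and prod: "- ((a + b) * (a - b)) = b^2 - a^2"
    and y1: "(a + b) * (a - b) / (4 * (2 * a)^2) = (a^2 - b^2) / (16 * a^2)"
    by (simp_all add: power2_eq_square algebra_simps)
  have "(2 * a)^2 / (64 * (a + b) * (a - b)) = (4 * a^2) / (4 * (16 * (a^2 - b^2)))"
    by (simp add: power2_eq_square algebra_simps)
  then have y2: "(2 * a)^2 / (64 * (a + b) * (a - b)) = a^2 / (16 * (a^2 - b^2))"
    by (simp only: mult_divide_mult_cancel_left_if) simp
  have zS: "in_Zp p (a + b)" and zD: "in_Zp p (a - b)" using uS uD Zp_unit_def by auto
  note part1 = binomial_4k_2k_sum_cong[OF p \<open>odd p\<close> zS zD, unfolded sum diff y1, OF u2a u2b]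
  note part2 = binomial_4k_2k_sum_reciprocal_cong_1mod4[OF p _ uS uD, unfolded sum diff prod y2, OF _ u2b]
  note part3 = binomial_4k_2k_sum_reciprocal_cong_3mod4[OF p _ uS uD, unfolded sum diff prod y2, OF _ u2b]
  have "p \<noteq> 1" using p by auto
  then have "4 dvd p - 1 \<Longrightarrow> p mod 4 = 1" "4 dvd p - 3 \<Longrightarrow> p mod 4 = 3"
    using \<open>odd p\<close> by presburger+
  then show ?thesis using part1 part2 part3 by blast
qed

end
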